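(* Let $f\in\mathcal{H}^2_{\omega}$. For an integer $k\geq1$ and $\lambda\in\mathbb{C}$ put $g_{k,\lambda}(z)=z^k+\lambda$. The following are equivalent: (i) $f$ is $\mathcal{H}^2_{\omega}$-inner; (ii) $\|f\|=1$ and for every integer $k\geq 1$ at least one of the following holds: (C1) there is a constant $C_k$ with $\|fg_{k,\lambda}\|^2\leq C_k+|\lambda|^2$ for all $\lambda\in\mathbb{C}$; (C2) there is a constant $D_k$ with $\|fg_{k,\lambda}\|^2\geq D_k+|\lambda|^2$ for all $\lambda\in\mathbb{C}$; (iii) $\|f\|=1$ and $|p(0)|\leq\|pf\|$ for every polynomial $p\in\mathbb{C}[z]$.
   Context: Let $\omega=\{\omega_n\}_{n\geq 0}$ be a sequence of positive reals with $\omega_0=1$ and $\lim_{n\to\infty}\omega_{n+1}/\omega_n=1$. $\mathcal{H}^2_{\omega}$ is the Hilbert space of power series $f(z)=\sum_{n\ge0}a_nz^n$ with $\|f\|^2=\sum_{n\geq0}\omega_n|a_n|^2<\infty$ and inner product $\langle f,g\rangle=\sum_n\omega_na_n\overline{b_n}$ for $g=\sum b_nz^n$; its elements are holomorphic on the unit disk $\mathbb{D}$. A function $f\in\mathcal{H}^2_{\omega}$ is $\mathcal{H}^2_{\omega}$-inner if $\|f\|=1$ and $\langle z^mf,f\rangle=0$ for all integers $m\geq1$. *)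

theory Defs
  imports "HOL-Analysis.Analysis" "HOL-Computational_Algebra.Polynomial_FPS"
begin

definition admissible_weight :: "(nat \<Rightarrow> real) \<Rightarrow> bool" where
  "admissible_weight \<omega> \<longleftrightarrow> (\<forall>n. \<omega> n > 0) \<and> \<omega> 0 = 1 \<and>
     ((\<lambda>n. \<omega> (Suc n) / \<omega> n) \<longlonglongrightarrow> 1)"

definition in_H2w :: "(nat \<Rightarrow> real) \<Rightarrow> complex fps \<Rightarrow> bool" where
  "in_H2w \<omega> f \<longleftrightarrow> summable (\<lambda>n. \<omega> n * (cmod (fps_nth f n))\<^sup>2)"

definition H2w_norm :: "(nat \<Rightarrow> real) \<Rightarrow> complex fps \<Rightarrow> real" where
  "H2w_norm \<omega> f = sqrt (\<Sum>n. \<omega> n * (cmod (fps_nth f n))\<^sup>2)"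

definition H2w_inner :: "(nat \<Rightarrow> real) \<Rightarrow> complex fps \<Rightarrow> complex fps \<Rightarrow> complex" where
  "H2w_inner \<omega> f g = (\<Sum>n. complex_of_real (\<omega> n) * (fps_nth f n) * cnj (fps_nth g n))"

definition H2w_inner_fn :: "(nat \<Rightarrow> real) \<Rightarrow> complex fps \<Rightarrow> bool" where
  "H2w_inner_fn \<omega> f \<longleftrightarrow> in_H2w \<omega> f \<and> H2w_norm \<omega> f = 1 \<and>
     (\<forall>m::nat. m \<ge> 1 \<longrightarrow> H2w_inner \<omega> (fps_X ^ m * f) f = 0)"

definition g_fn :: "nat \<Rightarrow> complex \<Rightarrow> complex fps" where
  "g_fn k c = fps_X ^ k + fps_const c"

end

theory Submission
  imports Defs
begin

text \<open>
  In \<open>H\<^sup>2\<^sub>\<omega>\<close> one has \<open>\<parallel>c u + v\<parallel>\<^sup>2 = \<bar>c\<bar>\<^sup>2 \<parallel>u\<parallel>\<^sup>2 + \<parallel>v\<parallel>\<^sup>2 + 2 Re (c \<langle>u, v\<rangle>)\<close>.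
  Taking \<open>u = z\<^sup>k f\<close>, \<open>v = f\<close> and \<open>\<parallel>f\<parallel> = 1\<close>, the quantity
  \<open>\<parallel>f g\<^sub>k\<^sub>,\<^sub>\<lambda>\<parallel>\<^sup>2 - \<bar>\<lambda>\<bar>\<^sup>2\<close> is a constant plus the real-linear function
  \<open>2 Re (\<lambda> \<langle>f, z\<^sup>k f\<rangle>)\<close> of \<open>\<lambda>\<close>, which is bounded on one side only if
  \<open>\<langle>z\<^sup>k f, f\<rangle> = 0\<close>. For \<open>p = 1 + \<lambda> z\<^sup>m\<close> the bound \<open>\<bar>p(0)\<bar> \<le> \<parallel>p f\<parallel>\<close> says
  \<open>0 \<le> \<bar>\<lambda>\<bar>\<^sup>2 \<parallel>z\<^sup>m f\<parallel>\<^sup>2 + 2 Re (\<lambda> \<langle>z\<^sup>m f, f\<rangle>)\<close>, and \<open>\<lambda>\<close> a small negative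
  multiple of the conjugate of \<open>\<langle>z\<^sup>m f, f\<rangle>\<close> forces that inner product to vanish.
  Conversely, an inner \<open>f\<close> is orthogonal to \<open>z q f\<close> for every polynomial \<open>q\<close>
  (the shift is bounded on \<open>H\<^sup>2\<^sub>\<omega>\<close> because \<open>\<omega>\<^sub>n\<^sub>+\<^sub>1 / \<omega>\<^sub>n\<close> converges), so writing
  \<open>p = p(0) + z q\<close> gives \<open>\<parallel>p f\<parallel>\<^sup>2 = \<bar>p(0)\<bar>\<^sup>2 + \<parallel>z q f\<parallel>\<^sup>2\<close>.
\<close>

lemma admissible_weight_pos: "admissible_weight \<omega> \<Longrightarrow> 0 < \<omega> n"
  unfolding admissible_weight_def by blast

lemma admissible_weight_shift_bound:
  assumes "admissible_weight \<omega>"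
  obtains M where "\<And>n. \<omega> (Suc n) \<le> M * \<omega> n"
proof -
  have "Bseq (\<lambda>n. \<omega> (Suc n) / \<omega> n)"
    using assms unfolding admissible_weight_def by (blast intro: convergent_imp_Bseq convergentI)
  then obtain M where "\<And>n. norm (\<omega> (Suc n) / \<omega> n) \<le> M" by (meson BseqE)
  then have ratio: "\<omega> (Suc n) / \<omega> n \<le> M" for n
    using admissible_weight_pos[OF assms] by (smt (verit) real_norm_def)
  have "\<omega> (Suc n) \<le> M * \<omega> n" for n
    using ratio[of n] admissible_weight_pos[OF assms, of n] by (simp add: pos_divide_le_eq)
  then show thesis by (rule that)
qed

lemma in_H2w_shift:
  assumes "admissible_weight \<omega>" "in_H2w \<omega> u"
  shows "in_H2w \<omega> (fps_X * u)"
proof -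
  obtain M where M: "\<And>n. \<omega> (Suc n) \<le> M * \<omega> n"
    using admissible_weight_shift_bound[OF assms(1)] by blast
  have "summable (\<lambda>n. M * (\<omega> n * (cmod (fps_nth u n))\<^sup>2))"
    using assms(2) unfolding in_H2w_def by (rule summable_mult)
  then have "summable (\<lambda>n. \<omega> (Suc n) * (cmod (fps_nth u n))\<^sup>2)"
  proof (rule summable_comparison_test'[where N = 0])
    fix n
    have "\<omega> (Suc n) * (cmod (fps_nth u n))\<^sup>2 \<le> M * \<omega> n * (cmod (fps_nth u n))\<^sup>2"
      using M by (rule mult_right_mono) simp
    then show "norm (\<omega> (Suc n) * (cmod (fps_nth u n))\<^sup>2) \<le> M * (\<omega> n * (cmod (fps_nth u n))\<^sup>2)"
      using admissible_weight_pos[OF assms(1), of "Suc n"] by (simp add: mult.assoc)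
  qed
  then show ?thesis
    unfolding in_H2w_def by (subst summable_Suc_iff[symmetric]) simp
qed

lemma in_H2w_Xpow_mult:
  assumes "admissible_weight \<omega>" "in_H2w \<omega> u"
  shows "in_H2w \<omega> (fps_X ^ k * u)"
  by (induction k) (simp_all add: assms mult.assoc in_H2w_shift[OF assms(1)])

lemma in_H2w_add_scaled:
  assumes "\<And>n. 0 \<le> \<omega> n" "in_H2w \<omega> u" "in_H2w \<omega> v"
  shows "in_H2w \<omega> (fps_const c * u + v)"
proof -
  have bound: "(cmod (a + b))\<^sup>2 \<le> 2 * (cmod a)\<^sup>2 + 2 * (cmod b)\<^sup>2" for a b :: complex
  proof -
    have "(cmod (a + b))\<^sup>2 \<le> (cmod a + cmod b)\<^sup>2" by (simp add: norm_triangle_ineq power_mono)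
    also have "\<dots> \<le> 2 * (cmod a)\<^sup>2 + 2 * (cmod b)\<^sup>2"
      using sum_squares_bound[of "cmod a" "cmod b"] by (simp add: power2_sum)
    finally show ?thesis .
  qed
  have "summable (\<lambda>n. 2 * (cmod c)\<^sup>2 * (\<omega> n * (cmod (fps_nth u n))\<^sup>2) + 2 * (\<omega> n * (cmod (fps_nth v n))\<^sup>2))"
    using assms(2,3) unfolding in_H2w_def by (intro summable_add summable_mult)
  then show ?thesis
    unfolding in_H2w_def
  proof (rule summable_comparison_test'[where N = 0])
    fix n
    have "\<omega> n * (cmod (c * fps_nth u n + fps_nth v n))\<^sup>2
          \<le> \<omega> n * (2 * (cmod (c * fps_nth u n))\<^sup>2 + 2 * (cmod (fps_nth v n))\<^sup>2)"
      using assms(1)[of n] by (intro mult_left_mono bound)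
    then show "norm (\<omega> n * (cmod (fps_nth (fps_const c * u + v) n))\<^sup>2)
          \<le> 2 * (cmod c)\<^sup>2 * (\<omega> n * (cmod (fps_nth u n))\<^sup>2) + 2 * (\<omega> n * (cmod (fps_nth v n))\<^sup>2)"
      using assms(1)[of n] by (simp add: norm_mult power_mult_distrib algebra_simps)
  qed
qed

lemma in_H2w_poly_mult:
  assumes "admissible_weight \<omega>" "in_H2w \<omega> f"
  shows "in_H2w \<omega> (fps_of_poly p * f)"
proof (induction p)
  case (pCons a q)
  have "fps_of_poly (pCons a q) * f = fps_const a * f + fps_X * (fps_of_poly q * f)"
    by (simp add: fps_of_poly_pCons algebra_simps)
  then show ?case
    using admissible_weight_pos[OF assms(1)] assms(2) in_H2w_shift[OF assms(1) pCons.IH]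
    by (simp add: in_H2w_add_scaled less_imp_le)
qed (simp add: in_H2w_def)

lemma H2w_norm_sq_sums:
  assumes "\<And>n. 0 \<le> \<omega> n" "in_H2w \<omega> u"
  shows "(\<lambda>n. \<omega> n * (cmod (fps_nth u n))\<^sup>2) sums (H2w_norm \<omega> u)\<^sup>2"
proof -
  have "0 \<le> (\<Sum>n. \<omega> n * (cmod (fps_nth u n))\<^sup>2)"
    using assms unfolding in_H2w_def by (intro suminf_nonneg) auto
  then show ?thesis
    using assms(2) unfolding in_H2w_def H2w_norm_def by (simp add: summable_sums)
qed

lemma H2w_norm_nonneg:
  assumes "\<And>n. 0 \<le> \<omega> n" "in_H2w \<omega> u"
  shows "0 \<le> H2w_norm \<omega> u"
  using assms unfolding in_H2w_def H2w_norm_def by (intro real_sqrt_ge_zero suminf_nonneg) auto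

lemma H2w_inner_sums:
  assumes "\<And>n. 0 \<le> \<omega> n" "in_H2w \<omega> u" "in_H2w \<omega> v"
  shows "(\<lambda>n. complex_of_real (\<omega> n) * fps_nth u n * cnj (fps_nth v n)) sums H2w_inner \<omega> u v"
proof -
  have "summable (\<lambda>n. \<omega> n * (cmod (fps_nth u n))\<^sup>2 + \<omega> n * (cmod (fps_nth v n))\<^sup>2)"
    using assms(2,3) unfolding in_H2w_def by (rule summable_add)
  then have "summable (\<lambda>n. norm (complex_of_real (\<omega> n) * fps_nth u n * cnj (fps_nth v n)))"
  proof (rule summable_comparison_test'[where N = 0])
    fix n
    let ?a = "fps_nth u n" and ?b = "fps_nth v n"
    have "0 \<le> cmod ?a * cmod ?b" by simp
    then have "cmod ?a * cmod ?b \<le> (cmod ?a)\<^sup>2 + (cmod ?b)\<^sup>2"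
      using sum_squares_bound[of "cmod ?a" "cmod ?b"] by linarith
    then have "\<omega> n * (cmod ?a * cmod ?b) \<le> \<omega> n * ((cmod ?a)\<^sup>2 + (cmod ?b)\<^sup>2)"
      by (rule mult_left_mono) (rule assms(1))
    then show "norm (norm (complex_of_real (\<omega> n) * ?a * cnj ?b))
               \<le> \<omega> n * (cmod ?a)\<^sup>2 + \<omega> n * (cmod ?b)\<^sup>2"
      using assms(1)[of n] by (simp add: norm_mult distrib_left)
  qed
  then show ?thesis
    unfolding H2w_inner_def by (rule summable_sums[OF summable_norm_cancel])
qed

lemma H2w_inner_commute:
  assumes "\<And>n. 0 \<le> \<omega> n" "in_H2w \<omega> u" "in_H2w \<omega> v"
  shows "H2w_inner \<omega> v u = cnj (H2w_inner \<omega> u v)"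
proof -
  have "(\<lambda>n. cnj (complex_of_real (\<omega> n) * fps_nth u n * cnj (fps_nth v n))) sums cnj (H2w_inner \<omega> u v)"
    using H2w_inner_sums[OF assms] by (rule sums_cnj[THEN iffD2])
  then have "(\<lambda>n. complex_of_real (\<omega> n) * fps_nth v n * cnj (fps_nth u n)) sums cnj (H2w_inner \<omega> u v)"
    by (simp add: mult.assoc mult.commute[of "cnj _"])
  then show ?thesis unfolding H2w_inner_def by (rule sums_unique[symmetric])
qed

lemma H2w_inner_add_scaled_left:
  assumes "\<And>n. 0 \<le> \<omega> n" "in_H2w \<omega> u" "in_H2w \<omega> v" "in_H2w \<omega> w"
  shows "H2w_inner \<omega> (fps_const c * u + v) w = c * H2w_inner \<omega> u w + H2w_inner \<omega> v w"
proof -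
  have "(\<lambda>n. c * (complex_of_real (\<omega> n) * fps_nth u n * cnj (fps_nth w n))
             + complex_of_real (\<omega> n) * fps_nth v n * cnj (fps_nth w n))
        sums (c * H2w_inner \<omega> u w + H2w_inner \<omega> v w)"
    using assms by (intro sums_add sums_mult H2w_inner_sums)
  then have "(\<lambda>n. complex_of_real (\<omega> n) * fps_nth (fps_const c * u + v) n * cnj (fps_nth w n))
        sums (c * H2w_inner \<omega> u w + H2w_inner \<omega> v w)"
    by (simp add: algebra_simps)
  then show ?thesis unfolding H2w_inner_def by (rule sums_unique[symmetric])
qed

lemma H2w_norm_add_scaled_sq:
  assumes "\<And>n. 0 \<le> \<omega> n" "in_H2w \<omega> u" "in_H2w \<omega> v"
  shows "(H2w_norm \<omega> (fps_const c * u + v))\<^sup>2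
         = (cmod c)\<^sup>2 * (H2w_norm \<omega> u)\<^sup>2 + (H2w_norm \<omega> v)\<^sup>2 + 2 * Re (c * H2w_inner \<omega> u v)"
proof -
  have "(\<lambda>n. (cmod c)\<^sup>2 * (\<omega> n * (cmod (fps_nth u n))\<^sup>2) + \<omega> n * (cmod (fps_nth v n))\<^sup>2
             + 2 * Re (c * (complex_of_real (\<omega> n) * fps_nth u n * cnj (fps_nth v n))))
        sums ((cmod c)\<^sup>2 * (H2w_norm \<omega> u)\<^sup>2 + (H2w_norm \<omega> v)\<^sup>2 + 2 * Re (c * H2w_inner \<omega> u v))"
    using assms by (intro sums_add sums_mult sums_Re H2w_norm_sq_sums H2w_inner_sums)
  moreover have "\<omega> n * (cmod (fps_nth (fps_const c * u + v) n))\<^sup>2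
      = (cmod c)\<^sup>2 * (\<omega> n * (cmod (fps_nth u n))\<^sup>2) + \<omega> n * (cmod (fps_nth v n))\<^sup>2
        + 2 * Re (c * (complex_of_real (\<omega> n) * fps_nth u n * cnj (fps_nth v n)))" for n
  proof -
    have sq: "(cmod (c * a + b))\<^sup>2 = (cmod c)\<^sup>2 * (cmod a)\<^sup>2 + (cmod b)\<^sup>2 + 2 * Re (c * a * cnj b)"
      for a b :: complex
      unfolding cmod_power2 by (simp add: power2_eq_square algebra_simps)
    have "Re (c * (complex_of_real r * a * cnj b)) = r * Re (c * a * cnj b)" for r a b
      by (simp add: algebra_simps)
    then show ?thesis
      unfolding fps_add_nth fps_mult_left_const_nth sq by (simp add: algebra_simps)
  qed
  ultimately have "(\<lambda>n. \<omega> n * (cmod (fps_nth (fps_const c * u + v) n))\<^sup>2)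
        sums ((cmod c)\<^sup>2 * (H2w_norm \<omega> u)\<^sup>2 + (H2w_norm \<omega> v)\<^sup>2 + 2 * Re (c * H2w_inner \<omega> u v))"
    by (simp only:)
  moreover have "(\<lambda>n. \<omega> n * (cmod (fps_nth (fps_const c * u + v) n))\<^sup>2)
        sums (H2w_norm \<omega> (fps_const c * u + v))\<^sup>2"
    using assms by (intro H2w_norm_sq_sums in_H2w_add_scaled)
  ultimately show ?thesis by (rule sums_unique2[symmetric])
qed

lemma H2w_inner_Xpow_poly_mult_eq_0:
  assumes adm: "admissible_weight \<omega>" and f: "in_H2w \<omega> f"
    and orth: "\<And>m. 1 \<le> m \<Longrightarrow> H2w_inner \<omega> (fps_X ^ m * f) f = 0"
    and "1 \<le> m"
  shows "H2w_inner \<omega> (fps_X ^ m * (fps_of_poly q * f)) f = 0"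
  using \<open>1 \<le> m\<close>
proof (induction q arbitrary: m)
  case (pCons b r)
  have "fps_X ^ m * (fps_of_poly (pCons b r) * f)
        = fps_const b * (fps_X ^ m * f) + fps_X ^ Suc m * (fps_of_poly r * f)"
    by (simp add: fps_of_poly_pCons algebra_simps)
  moreover have "H2w_inner \<omega> (fps_const b * (fps_X ^ m * f) + fps_X ^ Suc m * (fps_of_poly r * f)) f
        = b * H2w_inner \<omega> (fps_X ^ m * f) f + H2w_inner \<omega> (fps_X ^ Suc m * (fps_of_poly r * f)) f"
    using adm f admissible_weight_pos[OF adm]
    by (intro H2w_inner_add_scaled_left in_H2w_Xpow_mult in_H2w_poly_mult) (auto intro: less_imp_le)
  ultimately show ?case
    using orth[OF pCons.prems] pCons.IH[of "Suc m"] by simp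
qed (simp add: H2w_inner_def)

lemma Re_mult_bounded_above_imp_zero:
  fixes a :: complex
  assumes "\<And>c. Re (c * a) \<le> K"
  shows "a = 0"
proof (rule ccontr)
  assume "a \<noteq> 0"
  define c where "c = complex_of_real ((\<bar>K\<bar> + 1) / (cmod a)\<^sup>2) * cnj a"
  have "Re (c * a) = \<bar>K\<bar> + 1"
    using \<open>a \<noteq> 0\<close> unfolding c_def
    by (simp add: mult.assoc mult.commute[of "cnj a"] complex_norm_square[symmetric] del: of_real_power)
  then show False using assms[of c] by linarith
qed

lemma nonpos_if_le_pos_multiples:
  fixes x y :: real
  assumes "0 \<le> y" "\<And>t. 0 < t \<Longrightarrow> x \<le> t * y"
  shows "x \<le> 0"
proof (rule field_le_epsilon)
  fix e :: real
  assume "0 < e"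
  then have "x \<le> e / (y + 1) * y" using assms(1) by (intro assms(2)) simp
  also have "\<dots> \<le> e" using \<open>0 < e\<close> \<open>0 \<le> y\<close> by (simp add: field_simps)
  finally show "x \<le> 0 + e" by simp
qed

lemma H2w_norm_mult_g_fn_sq:
  assumes "admissible_weight \<omega>" "in_H2w \<omega> f"
  shows "(H2w_norm \<omega> (f * g_fn k c))\<^sup>2 = (cmod c)\<^sup>2 * (H2w_norm \<omega> f)\<^sup>2
           + (H2w_norm \<omega> (fps_X ^ k * f))\<^sup>2 + 2 * Re (c * cnj (H2w_inner \<omega> (fps_X ^ k * f) f))"
proof -
  have pos: "\<And>n. 0 \<le> \<omega> n" and Xf: "in_H2w \<omega> (fps_X ^ k * f)"
    using assms by (simp_all add: admissible_weight_pos less_imp_le in_H2w_Xpow_mult)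
  have "f * g_fn k c = fps_const c * f + fps_X ^ k * f" by (simp add: g_fn_def algebra_simps)
  then show ?thesis
    using H2w_norm_add_scaled_sq[OF pos assms(2) Xf] H2w_inner_commute[OF pos Xf assms(2)] by simp
qed

lemma g_fn_bound_imp_orth:
  assumes "admissible_weight \<omega>" "in_H2w \<omega> f" "H2w_norm \<omega> f = 1"
    and "(\<exists>C. \<forall>c. (H2w_norm \<omega> (f * g_fn k c))\<^sup>2 \<le> C + (cmod c)\<^sup>2)
         \<or> (\<exists>D. \<forall>c. (H2w_norm \<omega> (f * g_fn k c))\<^sup>2 \<ge> D + (cmod c)\<^sup>2)"
  shows "H2w_inner \<omega> (fps_X ^ k * f) f = 0"
proof -
  define a where "a = cnj (H2w_inner \<omega> (fps_X ^ k * f) f)"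
  define A where "A = (H2w_norm \<omega> (fps_X ^ k * f))\<^sup>2"
  have expand: "(H2w_norm \<omega> (f * g_fn k c))\<^sup>2 = (cmod c)\<^sup>2 + A + 2 * Re (c * a)" for c
    using H2w_norm_mult_g_fn_sq[OF assms(1,2)] assms(3) unfolding a_def A_def by simp
  from assms(4) have "a = 0"
  proof
    assume "\<exists>C. \<forall>c. (H2w_norm \<omega> (f * g_fn k c))\<^sup>2 \<le> C + (cmod c)\<^sup>2"
    then obtain C where C: "\<And>c. (cmod c)\<^sup>2 + A + 2 * Re (c * a) \<le> C + (cmod c)\<^sup>2"
      unfolding expand by blast
    have "Re (c * a) \<le> (C - A) / 2" for c using C[of c] by (simp add: field_simps)
    then show "a = 0" by (rule Re_mult_bounded_above_imp_zero)
  next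
    assume "\<exists>D. \<forall>c. (H2w_norm \<omega> (f * g_fn k c))\<^sup>2 \<ge> D + (cmod c)\<^sup>2"
    then obtain D where D: "\<And>c. D + (cmod c)\<^sup>2 \<le> (cmod c)\<^sup>2 + A + 2 * Re (c * a)"
      unfolding expand by blast
    have "Re (c * - a) \<le> (A - D) / 2" for c using D[of c] by (simp add: field_simps)
    then have "- a = 0" by (rule Re_mult_bounded_above_imp_zero)
    then show "a = 0" by simp
  qed
  then show ?thesis unfolding a_def by simp
qed

lemma H2w_inner_fn_poly_bound:
  assumes adm: "admissible_weight \<omega>" and inner: "H2w_inner_fn \<omega> f"
  shows "cmod (poly p 0) \<le> H2w_norm \<omega> (fps_of_poly p * f)"
proof -
  have pos: "\<And>n. 0 \<le> \<omega> n" using admissible_weight_pos[OF adm] by (simp add: less_imp_le)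
  have f: "in_H2w \<omega> f" and norm: "H2w_norm \<omega> f = 1"
    and orth: "\<And>m. 1 \<le> m \<Longrightarrow> H2w_inner \<omega> (fps_X ^ m * f) f = 0"
    using inner unfolding H2w_inner_fn_def by auto
  obtain a q where p: "p = pCons a q" by (rule pCons_cases)
  define u where "u = fps_X * (fps_of_poly q * f)"
  have u: "in_H2w \<omega> u" unfolding u_def by (intro in_H2w_shift in_H2w_poly_mult adm f)
  have "H2w_inner \<omega> u f = 0"
    using H2w_inner_Xpow_poly_mult_eq_0[OF adm f orth, of 1 q] unfolding u_def by simp
  then have "H2w_inner \<omega> f u = 0" using H2w_inner_commute[OF pos u f] by simp
  moreover have "fps_of_poly p * f = fps_const a * f + u"
    unfolding p u_def by (simp add: fps_of_poly_pCons algebra_simps)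
  ultimately have "(H2w_norm \<omega> (fps_of_poly p * f))\<^sup>2 = (cmod a)\<^sup>2 + (H2w_norm \<omega> u)\<^sup>2"
    using H2w_norm_add_scaled_sq[OF pos f u, of a] norm by simp
  then have "(cmod (poly p 0))\<^sup>2 \<le> (H2w_norm \<omega> (fps_of_poly p * f))\<^sup>2" unfolding p by simp
  then show ?thesis
    using H2w_norm_nonneg[OF pos in_H2w_poly_mult[OF adm f]] by (rule power2_le_imp_le)
qed

lemma poly_bound_imp_orth:
  assumes adm: "admissible_weight \<omega>" and f: "in_H2w \<omega> f" and norm: "H2w_norm \<omega> f = 1"
    and bound: "\<And>p. cmod (poly p 0) \<le> H2w_norm \<omega> (fps_of_poly p * f)"
    and "1 \<le> m"
  shows "H2w_inner \<omega> (fps_X ^ m * f) f = 0"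
proof -
  have pos: "\<And>n. 0 \<le> \<omega> n" using admissible_weight_pos[OF adm] by (simp add: less_imp_le)
  have Xf: "in_H2w \<omega> (fps_X ^ m * f)" by (rule in_H2w_Xpow_mult[OF adm f])
  define a where "a = H2w_inner \<omega> (fps_X ^ m * f) f"
  define B where "B = (H2w_norm \<omega> (fps_X ^ m * f))\<^sup>2"
  have le: "2 * (cmod a)\<^sup>2 \<le> t * ((cmod a)\<^sup>2 * B)" if "0 < t" for t
  proof -
    define c where "c = - complex_of_real t * cnj a"
    have "1 \<le> cmod (poly (monom c m + 1) 0)" using \<open>1 \<le> m\<close> by (simp add: poly_monom power_0_left)
    also have "\<dots> \<le> H2w_norm \<omega> (fps_const c * (fps_X ^ m * f) + f)"
      using bound[of "monom c m + 1"] by (simp add: fps_of_poly_add fps_of_poly_monom algebra_simps)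
    finally have "1 \<le> (H2w_norm \<omega> (fps_const c * (fps_X ^ m * f) + f))\<^sup>2" by (rule one_le_power)
    also have "\<dots> = t\<^sup>2 * (cmod a)\<^sup>2 * B + 1 - 2 * t * (cmod a)\<^sup>2"
    proof -
      have "(cmod c)\<^sup>2 = t\<^sup>2 * (cmod a)\<^sup>2"
        unfolding c_def using \<open>0 < t\<close> by (simp add: norm_mult power_mult_distrib)
      moreover have "Re (c * a) = - t * (cmod a)\<^sup>2"
        unfolding c_def cmod_power2 by (simp add: power2_eq_square algebra_simps)
      ultimately show ?thesis
        unfolding H2w_norm_add_scaled_sq[OF pos Xf f] norm a_def[symmetric] B_def[symmetric]
        by (simp add: algebra_simps)
    qed
    finally show ?thesis using \<open>0 < t\<close> by (simp add: power2_eq_square)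
  qed
  have "2 * (cmod a)\<^sup>2 \<le> 0" by (rule nonpos_if_le_pos_multiples[OF _ le]) (simp add: B_def)
  then show ?thesis unfolding a_def by simp
qed

theorem mainTheorem2:
  fixes \<omega> :: "nat \<Rightarrow> real" and f :: "complex fps"
  assumes "admissible_weight \<omega>"
    and "in_H2w \<omega> f"
  shows "(H2w_inner_fn \<omega> f \<longleftrightarrow>
           (H2w_norm \<omega> f = 1 \<and>
            (\<forall>k::nat. k \<ge> 1 \<longrightarrow>
               ((\<exists>C::real. \<forall>c::complex. (H2w_norm \<omega> (f * g_fn k c))\<^sup>2 \<le> C + (cmod c)\<^sup>2) \<or>
                (\<exists>D::real. \<forall>c::complex. (H2w_norm \<omega> (f * g_fn k c))\<^sup>2 \<ge> D + (cmod c)\<^sup>2)))))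
       \<and> (H2w_inner_fn \<omega> f \<longleftrightarrow>
           (H2w_norm \<omega> f = 1 \<and>
            (\<forall>p::complex poly. cmod (poly p 0) \<le> H2w_norm \<omega> (fps_of_poly p * f))))"
proof -
  have inner_iff: "H2w_inner_fn \<omega> f \<longleftrightarrow>
      H2w_norm \<omega> f = 1 \<and> (\<forall>m::nat. m \<ge> 1 \<longrightarrow> H2w_inner \<omega> (fps_X ^ m * f) f = 0)"
    using assms(2) unfolding H2w_inner_fn_def by blast
  have upper_bound: "(H2w_norm \<omega> (f * g_fn k c))\<^sup>2 \<le> (H2w_norm \<omega> (fps_X ^ k * f))\<^sup>2 + (cmod c)\<^sup>2"
    if "H2w_inner_fn \<omega> f" "k \<ge> 1" for k c
    using that H2w_norm_mult_g_fn_sq[OF assms, of k c] inner_iff by simp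
  have "H2w_inner_fn \<omega> f \<longleftrightarrow>
           (H2w_norm \<omega> f = 1 \<and>
            (\<forall>k::nat. k \<ge> 1 \<longrightarrow>
               ((\<exists>C::real. \<forall>c::complex. (H2w_norm \<omega> (f * g_fn k c))\<^sup>2 \<le> C + (cmod c)\<^sup>2) \<or>
                (\<exists>D::real. \<forall>c::complex. (H2w_norm \<omega> (f * g_fn k c))\<^sup>2 \<ge> D + (cmod c)\<^sup>2))))"
    using inner_iff upper_bound g_fn_bound_imp_orth[OF assms] by blast
  moreover have "H2w_inner_fn \<omega> f \<longleftrightarrow>
           (H2w_norm \<omega> f = 1 \<and>
            (\<forall>p::complex poly. cmod (poly p 0) \<le> H2w_norm \<omega> (fps_of_poly p * f)))"
    using inner_iff poly_bound_imp_orth[OF assms] H2w_inner_fn_poly_bound[OF assms(1)] by blast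
  ultimately show ?thesis by blast
qed

end
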